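(* Let $X$ be a metric space, let $A\subseteq X$ be nonempty and let $Y$ be a hyperconvex metric space. Then for every $f\in\mathcal{N}(A,Y)$, the set $\Phi(f)$ of all $f'\in\mathcal{N}(X,Y)$ with $f'|_A=f$ is externally hyperconvex in $(\mathcal{N}(X,Y),d_\infty)$.
   Context: A metric space $Y$ is hyperconvex if $\bigcap_\alpha B(x_\alpha,r_\alpha)\ne\emptyset$ for every family of points $x_\alpha\in Y$ and $r_\alpha>0$ with $d(x_\alpha,x_\beta)\le r_\alpha+r_\beta$ ($B$ = closed ball). A subset $E$ of a metric space $Z$ is externally hyperconvex (with respect to $Z$) if for any family $\{x_\alpha\}\subseteq Z$ and reals $\{r_\alpha\}$ with $d(x_\alpha,x_\beta)\le r_\alpha+r_\beta$ and $\mathrm{dist}(x_\alpha,E)\le r_\alpha$ for all $\alpha,\beta$, one has $\bigcap_\alpha B(x_\alpha,r_\alpha)\cap E\ne\emptyset$. $\mathcal{N}(X,Y)$ is the set of bounded nonexpansive maps $X\to Y$ with the supremum metric $d_\infty$. *)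

theory Defs
  imports "HOL-Analysis.Analysis"
begin

definition nonexp_on :: "'a::metric_space set \<Rightarrow> ('a \<Rightarrow> 'b::metric_space) \<Rightarrow> bool" where
  "nonexp_on A f \<longleftrightarrow> (\<forall>x\<in>A. \<forall>y\<in>A. dist (f x) (f y) \<le> dist x y)"

text \<open>N(A,Y): bounded nonexpansive maps A -> Y (only values on A matter).\<close>
definition bnd_nonexp :: "'a::metric_space set \<Rightarrow> ('a \<Rightarrow> 'b::metric_space) set" where
  "bnd_nonexp A = {f. nonexp_on A f \<and> bounded (f ` A)}"

definition dinf :: "('a \<Rightarrow> 'b::metric_space) \<Rightarrow> ('a \<Rightarrow> 'b) \<Rightarrow> real" where
  "dinf f g = (SUP x. dist (f x) (g x))"

text \<open>Hyperconvexity; a family of (centre, radius) pairs is represented as a set of pairs.\<close>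
definition hyperconvex :: "'b::metric_space set \<Rightarrow> bool" where
  "hyperconvex Y \<longleftrightarrow>
     (\<forall>F. F \<subseteq> Y \<times> {r. r > 0} \<longrightarrow>
        (\<forall>(x,r)\<in>F. \<forall>(y,s)\<in>F. dist x y \<le> r + s) \<longrightarrow>
        (\<exists>z\<in>Y. \<forall>(x,r)\<in>F. dist x z \<le> r))"

text \<open>External hyperconvexity of E in the metric space (Z,d); dist(x,E) is the
  infimum in the extended reals (= infinity for empty E).\<close>
definition ext_hyperconvex :: "'c set \<Rightarrow> ('c \<Rightarrow> 'c \<Rightarrow> real) \<Rightarrow> 'c set \<Rightarrow> bool" where
  "ext_hyperconvex Z d E \<longleftrightarrow>
     (\<forall>F. F \<subseteq> Z \<times> (UNIV::real set) \<longrightarrow>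
        (\<forall>(x,r)\<in>F. \<forall>(y,s)\<in>F. d x y \<le> r + s) \<longrightarrow>
        (\<forall>(x,r)\<in>F. (INF e\<in>E. ereal (d x e)) \<le> ereal r) \<longrightarrow>
        (\<exists>e\<in>E. \<forall>(x,r)\<in>F. d x e \<le> r))"

end

theory Submission
  imports Defs
begin

text \<open>Since every member of \<open>\<Phi>(f)\<close> agrees
  with \<open>f\<close> on \<open>A\<close>, the condition \<open>dist(g, \<Phi>(f)) \<le> r\<close> forces \<open>d(f a, g a) \<le> r\<close> on \<open>A\<close>.
  We then extend \<open>f\<close> by Zorn's lemma: a maximal nonexpansive partial map extending \<open>f\<close> and
  staying \<open>r\<close>-close to every \<open>g\<close> is total, since a missing point \<open>x\<close> can be sent to any
  common point of the balls \<open>B(h y, d(x, y))\<close> (\<open>y\<close> in the domain) and \<open>B(g x, r)\<close>. These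
  balls pairwise meet because \<open>h\<close> and the \<open>g\<close> are nonexpansive and \<open>h\<close> is \<open>r\<close>-close to
  \<open>g\<close>, so hyperconvexity of \<open>Y\<close> supplies the point. The extension is bounded, being close
  to a bounded \<open>g\<close>, and hence lies in \<open>\<Phi>(f)\<close> within distance \<open>r\<close> of each \<open>g\<close>.\<close>

lemma hyperconvex_UNIV_nonneg_radii:
  assumes hc: "hyperconvex (UNIV :: 'b::metric_space set)"
    and nonneg: "\<forall>(x,r)\<in>F. r \<ge> (0::real)"
    and consistent: "\<forall>(x,r)\<in>F. \<forall>(y,s)\<in>F. dist x y \<le> r + s"
  shows "\<exists>z::'b. \<forall>(x,r)\<in>F. dist x z \<le> r"
proof (cases "\<exists>x0. (x0, 0) \<in> F")
  case True
  then obtain x0 where x0: "(x0, 0) \<in> F" by blast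
  have "dist x x0 \<le> r" if "(x, r) \<in> F" for x r
    using consistent that x0 by fastforce
  then show ?thesis by blast
next
  case False
  with nonneg have pos: "F \<subseteq> UNIV \<times> {r. r > 0}" by (auto simp: less_le)
  have "\<exists>z\<in>UNIV. \<forall>(x,r)\<in>F. dist x z \<le> r"
    using hc[unfolded hyperconvex_def, THEN spec, of F] pos consistent by blast
  then show ?thesis by blast
qed

text \<open>Partial maps are represented by their graphs, so that chains have unions.\<close>

definition nonexp_graph :: "('a::metric_space \<times> 'b::metric_space) set \<Rightarrow> bool" where
  "nonexp_graph G \<longleftrightarrow> (\<forall>(x,y)\<in>G. \<forall>(x',y')\<in>G. dist y y' \<le> dist x x')"

lemma nonexp_graphD:
  "nonexp_graph G \<Longrightarrow> (x,y) \<in> G \<Longrightarrow> (x',y') \<in> G \<Longrightarrow> dist y y' \<le> dist x x'"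
  unfolding nonexp_graph_def by fast

lemma nonexp_graph_functional:
  assumes "nonexp_graph G" "(x,y) \<in> G" "(x,y') \<in> G"
  shows "y = y'"
  using nonexp_graphD[OF assms] by simp

lemma nonexp_graph_Union_chain:
  assumes chain: "\<forall>X\<in>C. \<forall>Y\<in>C. X \<subseteq> Y \<or> Y \<subseteq> X" and graphs: "\<forall>G\<in>C. nonexp_graph G"
  shows "nonexp_graph (\<Union>C)"
  unfolding nonexp_graph_def
proof clarify
  fix x y x' y' X Y assume xy: "(x,y) \<in> X" "X \<in> C" and xy': "(x',y') \<in> Y" "Y \<in> C"
  from chain xy(2) xy'(2) have "X \<subseteq> Y \<or> Y \<subseteq> X" by blast
  then show "dist y y' \<le> dist x x'"
    using nonexp_graphD graphs xy xy' by blast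
qed

lemma nonexp_graph_insert_point:
  assumes hc: "hyperconvex (UNIV :: 'b::metric_space set)"
    and G: "nonexp_graph (G :: ('a::metric_space \<times> 'b) set)"
    and F_nonexp: "\<forall>(g,r)\<in>F. nonexp_on UNIV g"
    and F_consistent: "\<forall>(g,r)\<in>F. \<forall>(g',r')\<in>F. \<forall>x. dist (g x) (g' x) \<le> r + r'"
    and G_within: "\<forall>(y,w)\<in>G. \<forall>(g,r)\<in>F. dist w (g y) \<le> r"
  shows "\<exists>z. nonexp_graph (insert (x,z) G) \<and> (\<forall>(g,r)\<in>F. dist z (g x) \<le> r)"
proof -
  define H where "H = (\<lambda>(y,w). (w, dist x y)) ` G \<union> (\<lambda>(g,r). (g x, r)) ` F"
  have mixed: "dist w (g x) \<le> dist x y + r" if "(y,w) \<in> G" "(g,r) \<in> F" for y w g r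
  proof -
    have "dist w (g x) \<le> dist w (g y) + dist (g y) (g x)" by (rule dist_triangle)
    moreover have "dist w (g y) \<le> r" using G_within that by blast
    moreover have "dist (g y) (g x) \<le> dist y x"
      using F_nonexp that(2) unfolding nonexp_on_def by blast
    ultimately show ?thesis by (simp add: dist_commute)
  qed
  have "dist c d \<le> r + s" if cr: "(c,r) \<in> H" and ds: "(d,s) \<in> H" for c r d s
  proof -
    consider (GG) y y' where "(y,c) \<in> G" "r = dist x y" "(y',d) \<in> G" "s = dist x y'"
      | (GF) y g where "(y,c) \<in> G" "r = dist x y" "(g,s) \<in> F" "d = g x"
      | (FG) g y where "(g,r) \<in> F" "c = g x" "(y,d) \<in> G" "s = dist x y"
      | (FF) g g' where "(g,r) \<in> F" "c = g x" "(g',s) \<in> F" "d = g' x"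
      using cr ds unfolding H_def by auto
    then show ?thesis
    proof cases
      case GG
      then have "dist c d \<le> dist y y'" using nonexp_graphD[OF G] by blast
      then show ?thesis using GG dist_triangle2[of y y' x] by (simp add: dist_commute)
    next
      case GF
      then show ?thesis using mixed by blast
    next
      case FG
      then show ?thesis using mixed[of y d g r] by (simp add: dist_commute)
    next
      case FF
      then show ?thesis using F_consistent by blast
    qed
  qed
  then have H_consistent: "\<forall>(c,r)\<in>H. \<forall>(d,s)\<in>H. dist c d \<le> r + s" by fast
  have H_nonneg: "\<forall>(c,r)\<in>H. r \<ge> 0"
    using F_consistent unfolding H_def by fastforce
  obtain z where z: "\<forall>(c,r)\<in>H. dist c z \<le> r"
    using hyperconvex_UNIV_nonneg_radii[OF hc H_nonneg H_consistent] by blast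
  have "dist w z \<le> dist y x" if "(y,w) \<in> G" for y w
    using z that unfolding H_def by (fastforce simp: dist_commute)
  then have "nonexp_graph (insert (x,z) G)"
    using G unfolding nonexp_graph_def by (fastforce simp: dist_commute)
  moreover have "\<forall>(g,r)\<in>F. dist z (g x) \<le> r"
    using z unfolding H_def by (fastforce simp: dist_commute)
  ultimately show ?thesis by blast
qed

lemma nonexp_extension_within:
  fixes f :: "'a::metric_space \<Rightarrow> 'b::metric_space"
  assumes hc: "hyperconvex (UNIV :: 'b set)"
    and f: "nonexp_on A f"
    and F_nonexp: "\<forall>(g,r)\<in>F. nonexp_on UNIV g"
    and F_consistent: "\<forall>(g,r)\<in>F. \<forall>(g',r')\<in>F. \<forall>x. dist (g x) (g' x) \<le> r + r'"
    and F_A: "\<forall>(g,r)\<in>F. \<forall>a\<in>A. dist (f a) (g a) \<le> r"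
  shows "\<exists>e. nonexp_on UNIV e \<and> (\<forall>a\<in>A. e a = f a) \<and> (\<forall>(g,r)\<in>F. \<forall>x. dist (e x) (g x) \<le> r)"
proof -
  define S where "S = {G. nonexp_graph G \<and> (\<lambda>a. (a, f a)) ` A \<subseteq> G \<and>
                          (\<forall>(y,w)\<in>G. \<forall>(g,r)\<in>F. dist w (g y) \<le> r)}"
  have "(\<lambda>a. (a, f a)) ` A \<in> S"
    using f F_A unfolding S_def nonexp_graph_def nonexp_on_def by (auto simp: dist_commute)
  then have "S \<noteq> {}" by blast
  moreover have "\<Union>C \<in> S" if "C \<noteq> {}" "subset.chain S C" for C
  proof -
    have CS: "C \<subseteq> S" and "\<forall>X\<in>C. \<forall>Y\<in>C. X \<subseteq> Y \<or> Y \<subseteq> X"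
      using that(2) unfolding subset.chain_def by auto
    then have "nonexp_graph (\<Union>C)" by (intro nonexp_graph_Union_chain) (auto simp: S_def)
    moreover have "(\<lambda>a. (a, f a)) ` A \<subseteq> \<Union>C" using that(1) CS unfolding S_def by blast
    moreover have "\<forall>(y,w)\<in>\<Union>C. \<forall>(g,r)\<in>F. dist w (g y) \<le> r" using CS unfolding S_def by blast
    ultimately show ?thesis unfolding S_def by blast
  qed
  ultimately obtain M where M: "M \<in> S" and maximal: "\<forall>X\<in>S. M \<subseteq> X \<longrightarrow> X = M"
    using subset_Zorn_nonempty[of S] by blast
  have M_graph: "nonexp_graph M" and M_f: "\<And>a. a \<in> A \<Longrightarrow> (a, f a) \<in> M"
    and M_within: "\<forall>(y,w)\<in>M. \<forall>(g,r)\<in>F. dist w (g y) \<le> r"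
    using M unfolding S_def by auto
  have total: "\<exists>y. (x,y) \<in> M" for x
  proof -
    obtain z where "nonexp_graph (insert (x,z) M)" "\<forall>(g,r)\<in>F. dist z (g x) \<le> r"
      using nonexp_graph_insert_point[OF hc M_graph F_nonexp F_consistent M_within] by blast
    then have "insert (x,z) M \<in> S" using M unfolding S_def by auto
    with maximal have "insert (x,z) M = M" by blast
    then show ?thesis by blast
  qed
  define e where "e x = (SOME y. (x,y) \<in> M)" for x
  have eM: "(x, e x) \<in> M" for x unfolding e_def using total by (rule someI_ex)
  have "nonexp_on UNIV e"
    unfolding nonexp_on_def using nonexp_graphD[OF M_graph eM eM] by blast
  moreover have "e a = f a" if "a \<in> A" for a
    using nonexp_graph_functional[OF M_graph eM M_f[OF that]] .
  moreover have "dist (e x) (g x) \<le> r" if "(g,r) \<in> F" for g r x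
    using M_within eM that by fast
  ultimately show ?thesis by blast
qed

lemma dist_le_dinf:
  assumes "g \<in> bnd_nonexp UNIV" "h \<in> bnd_nonexp UNIV"
  shows "dist (g x) (h x) \<le> dinf g h"
proof -
  from assms obtain c R c' R' where g: "\<And>y. dist c (g y) \<le> R" and h: "\<And>y. dist c' (h y) \<le> R'"
    unfolding bnd_nonexp_def bounded_def by blast
  have "dist (g y) (h y) \<le> R + dist c c' + R'" for y
    using dist_triangle3[of "g y" "h y" c] dist_triangle[of c "h y" c'] g[of y] h[of y] by linarith
  then have "bdd_above (range (\<lambda>y. dist (g y) (h y)))" by (rule bdd_aboveI2)
  then show ?thesis unfolding dinf_def by (intro cSUP_upper) auto
qed

lemma dinf_le:
  assumes "\<forall>x. dist (g x) (h x) \<le> r"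
  shows "dinf g h \<le> r"
  unfolding dinf_def using assms by (intro cSUP_least) auto

lemma bounded_range_if_dist_le:
  assumes "bounded (range g)" and close: "\<And>x. dist (e x) (g x) \<le> r"
  shows "bounded (range e)"
proof -
  from assms(1) obtain c R where g: "\<And>x. dist c (g x) \<le> R" unfolding bounded_def by blast
  have "dist c (e x) \<le> R + r" for x
    using dist_triangle[of c "e x" "g x"] g[of x] close[of x] by (simp add: dist_commute)
  then show ?thesis unfolding bounded_def by blast
qed

lemma bnd_nonexp_extension_exists:
  fixes f :: "'a::metric_space \<Rightarrow> 'b::metric_space"
  assumes hc: "hyperconvex (UNIV :: 'b set)" and "A \<noteq> {}" and f: "f \<in> bnd_nonexp A"
  shows "\<exists>e\<in>bnd_nonexp UNIV. \<forall>a\<in>A. e a = f a"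
proof -
  obtain c R where fR: "\<And>a. a \<in> A \<Longrightarrow> dist c (f a) \<le> R"
    using f unfolding bnd_nonexp_def bounded_def by blast
  have "0 \<le> R" using \<open>A \<noteq> {}\<close> fR zero_le_dist order_trans by blast
  then obtain e where e: "nonexp_on UNIV e" "\<forall>a\<in>A. e a = f a" "\<And>x. dist (e x) c \<le> R"
    using nonexp_extension_within[OF hc, of A f "{(\<lambda>_. c, R)}"] f fR
    by (auto simp: bnd_nonexp_def nonexp_on_def dist_commute)
  then have "bounded (range e)"
    using bounded_range_if_dist_le[of "\<lambda>_. c" e R] by simp
  with e show ?thesis by (auto simp: bnd_nonexp_def)
qed

lemma dist_le_if_INF_dinf_le:
  assumes g: "g \<in> bnd_nonexp UNIV" and E: "E \<subseteq> bnd_nonexp UNIV" and "\<forall>e\<in>E. e a = y"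
    and "(INF e\<in>E. ereal (dinf g e)) \<le> ereal r"
  shows "dist (g a) y \<le> r"
proof (rule field_le_epsilon)
  fix \<epsilon> :: real assume "0 < \<epsilon>"
  with assms(4) have "(INF e\<in>E. ereal (dinf g e)) < ereal (r + \<epsilon>)"
    by (simp add: order_le_less_trans)
  then obtain e where "e \<in> E" "dinf g e < r + \<epsilon>" by (auto simp: INF_less_iff)
  then show "dist (g a) y \<le> r + \<epsilon>"
    using dist_le_dinf[OF g, of e a] E assms(3) by fastforce
qed

lemma bnd_nonexp_extension_within:
  fixes f :: "'a::metric_space \<Rightarrow> 'b::metric_space"
  assumes hc: "hyperconvex (UNIV :: 'b set)" and "A \<noteq> {}" and f: "f \<in> bnd_nonexp A"
    and F: "F \<subseteq> bnd_nonexp UNIV \<times> UNIV"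
    and F_consistent: "\<forall>(g,r)\<in>F. \<forall>(g',r')\<in>F. dinf g g' \<le> r + r'"
    and F_A: "\<forall>(g,r)\<in>F. \<forall>a\<in>A. dist (f a) (g a) \<le> r"
  shows "\<exists>e\<in>bnd_nonexp UNIV. (\<forall>a\<in>A. e a = f a) \<and> (\<forall>(g,r)\<in>F. dinf g e \<le> r)"
proof (cases "F = {}")
  case True
  then show ?thesis using bnd_nonexp_extension_exists[OF hc \<open>A \<noteq> {}\<close> f] by blast
next
  case False
  then obtain g0 r0 where g0: "(g0, r0) \<in> F" by auto
  have "dist (g x) (g' x) \<le> r + r'" if "(g,r) \<in> F" "(g',r') \<in> F" for g r g' r' x
    using dist_le_dinf[of g g' x] F F_consistent that by fastforce
  moreover have "\<forall>(g,r)\<in>F. nonexp_on UNIV g" using F by (auto simp: bnd_nonexp_def)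
  moreover have "nonexp_on A f" using f by (simp add: bnd_nonexp_def)
  ultimately obtain e where e: "nonexp_on UNIV e" "\<forall>a\<in>A. e a = f a"
      and close: "\<forall>(g,r)\<in>F. \<forall>x. dist (e x) (g x) \<le> r"
    using nonexp_extension_within[OF hc _ _ _ F_A] by blast
  have "bounded (range g0)" using g0 F by (auto simp: bnd_nonexp_def)
  moreover have "\<And>x. dist (e x) (g0 x) \<le> r0" using g0 close by blast
  ultimately have "bounded (range e)" by (rule bounded_range_if_dist_le)
  with e have "e \<in> bnd_nonexp UNIV" by (simp add: bnd_nonexp_def)
  moreover have "\<forall>(g,r)\<in>F. dinf g e \<le> r"
    using close by (auto intro!: dinf_le simp: dist_commute)
  ultimately show ?thesis using e by blast
qed

theorem lemma5p4:
  fixes A :: "'a::metric_space set" and f :: "'a \<Rightarrow> 'b::metric_space"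
  assumes "A \<noteq> {}"
    and "hyperconvex (UNIV :: 'b set)"
    and "f \<in> bnd_nonexp A"
  shows "ext_hyperconvex (bnd_nonexp (UNIV :: 'a set)) dinf
           {f' \<in> bnd_nonexp (UNIV :: 'a set). \<forall>a\<in>A. f' a = f a}"
proof -
  let ?E = "{f' \<in> bnd_nonexp (UNIV :: 'a set). \<forall>a\<in>A. f' a = f a}"
  have "\<exists>e\<in>?E. \<forall>(g,r)\<in>F. dinf g e \<le> r"
    if F: "F \<subseteq> bnd_nonexp UNIV \<times> UNIV"
      and consistent: "\<forall>(g,r)\<in>F. \<forall>(g',r')\<in>F. dinf g g' \<le> r + r'"
      and near: "\<forall>(g,r)\<in>F. (INF e\<in>?E. ereal (dinf g e)) \<le> ereal r" for F
  proof -
    have "dist (f a) (g a) \<le> r" if "(g,r) \<in> F" "a \<in> A" for g r a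
      using dist_le_if_INF_dinf_le[of g ?E a "f a" r] F near that by (auto simp: dist_commute)
    then show ?thesis
      using bnd_nonexp_extension_within[OF assms(2,1,3) F consistent] by blast
  qed
  then show ?thesis unfolding ext_hyperconvex_def by blast
qed

end
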